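(* Let $X \subseteq S^{\mathbb{Z}}$ be a countable one-dimensional subshift of finite type over a finite alphabet $S$, and let $f : X \to X$ be a cellular automaton. Then the language of the asymptotic set $\mathcal{A}(f)$ is a $\Sigma^0_3$ set.
   Context: A subshift of finite type is a set $X \subseteq S^{\mathbb{Z}}$ of all configurations avoiding a finite set of forbidden words; a cellular automaton on $X$ is a continuous shift-commuting map $f: X \to X$. The asymptotic set is $\mathcal{A}(f) = \bigcup_{x \in X} \bigcap_{n \in \mathbb{N}} \overline{\bigcup_{k \geq n} \{f^k(x)\}}$. The language of a set $Y \subseteq S^{\mathbb{Z}}$ is the set of words $w\in S^*$ with $w = y_{[0,k-1]}$ for some $y \in Y$, $k\in\mathbb{N}$, viewed as a subset of $\mathbb{N}$ via a computable bijection. A set $P \subseteq \mathbb{N}$ is $\Sigma^0_3$ if $w \in P \iff (\exists c \in \mathbb{N})(\forall m \in \mathbb{N})(\exists \ell \in \mathbb{N}) R(c,m,\ell,w)$ for a recursive predicate $R$. *)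

theory Defs
  imports Main "HOL-Library.Nat_Bijection" "HOL-Library.Countable_Set"
begin

type_synonym 'a config = "int \<Rightarrow> 'a"

definition shift :: "'a config \<Rightarrow> 'a config" where
  "shift x = (\<lambda>i. x (i + 1))"

definition occurs_at :: "'a list \<Rightarrow> 'a config \<Rightarrow> int \<Rightarrow> bool" where
  "occurs_at w x i \<longleftrightarrow> map (\<lambda>j. x (i + int j)) [0..<length w] = w"

definition is_SFT :: "'a config set \<Rightarrow> bool" where
  "is_SFT X \<longleftrightarrow> (\<exists>F. finite F \<and> X = {x. \<forall>w\<in>F. \<forall>i. \<not> occurs_at w x i})"

text \<open>Product topology of discrete alphabets, written out via central cylinders [-m,m].\<close>
definition agree_on :: "nat \<Rightarrow> 'a config \<Rightarrow> 'a config \<Rightarrow> bool" where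
  "agree_on m x y \<longleftrightarrow> (\<forall>i. \<bar>i\<bar> \<le> int m \<longrightarrow> x i = y i)"

definition cont_on :: "'a config set \<Rightarrow> ('a config \<Rightarrow> 'a config) \<Rightarrow> bool" where
  "cont_on X f \<longleftrightarrow> (\<forall>x\<in>X. \<forall>n. \<exists>m. \<forall>y\<in>X. agree_on m x y \<longrightarrow> agree_on n (f x) (f y))"

definition cellular_automaton :: "'a config set \<Rightarrow> ('a config \<Rightarrow> 'a config) \<Rightarrow> bool" where
  "cellular_automaton X f \<longleftrightarrow> f ` X \<subseteq> X \<and> cont_on X f \<and> (\<forall>x\<in>X. f (shift x) = shift (f x))"

definition cl :: "'a config set \<Rightarrow> 'a config set" where
  "cl A = {y. \<forall>m. \<exists>z\<in>A. agree_on m y z}"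

definition asymptotic_set :: "'a config set \<Rightarrow> ('a config \<Rightarrow> 'a config) \<Rightarrow> 'a config set" where
  "asymptotic_set X f = (\<Union>x\<in>X. \<Inter>n. cl {(f ^^ k) x | k. k \<ge> n})"

definition language :: "'a config set \<Rightarrow> 'a list set" where
  "language Y = {w. \<exists>y\<in>Y. \<exists>k. w = map (\<lambda>j. y (int j)) [0..<k]}"

datatype recf = Zr | Sc | Id nat | Cn recf "recf list" | Pr recf recf | Mn recf

inductive reval :: "recf \<Rightarrow> nat list \<Rightarrow> nat \<Rightarrow> bool" where
  zr: "reval Zr xs 0"
| sc: "reval Sc (x # xs) (Suc x)"
| idp: "i < length xs \<Longrightarrow> reval (Id i) xs (xs ! i)"
| cn: "list_all2 (\<lambda>g y. reval g xs y) gs ys \<Longrightarrow> reval f ys z \<Longrightarrow> reval (Cn f gs) xs z"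
| pr0: "reval f xs y \<Longrightarrow> reval (Pr f g) (0 # xs) y"
| prS: "reval (Pr f g) (n # xs) y \<Longrightarrow> reval g (n # y # xs) z \<Longrightarrow> reval (Pr f g) (Suc n # xs) z"
| mn: "reval f (n # xs) 0 \<Longrightarrow> (\<forall>m<n. \<exists>y. reval f (m # xs) (Suc y)) \<Longrightarrow> reval (Mn f) xs n"

definition recursive_pred4 :: "(nat \<Rightarrow> nat \<Rightarrow> nat \<Rightarrow> nat \<Rightarrow> bool) \<Rightarrow> bool" where
  "recursive_pred4 R \<longleftrightarrow> (\<exists>c. \<forall>a b d w.
      (R a b d w \<longrightarrow> reval c [a, b, d, w] 1) \<and> (\<not> R a b d w \<longrightarrow> reval c [a, b, d, w] 0))"

definition Sigma0_3 :: "nat set \<Rightarrow> bool" where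
  "Sigma0_3 P \<longleftrightarrow> (\<exists>R. recursive_pred4 R \<and>
      (\<forall>w. w \<in> P \<longleftrightarrow> (\<exists>c. \<forall>m. \<exists>l. R c m l w)))"

definition word_code :: "('a \<Rightarrow> nat) \<Rightarrow> 'a list \<Rightarrow> nat" where
  "word_code e w = list_encode (map e w)"

end

theory Submission
  imports Defs
begin

text \<open>Every point of a countable SFT is eventually periodic in both directions: if an
  \<open>N\<close>-block (with \<open>N\<close> bounding the forbidden words) recurs at \<open>a < b < c\<close> but
  \<open>x[b, c)\<close> is not a copy of \<open>x[a, a + (c - b))\<close>, then freely concatenating copies of
  \<open>x[a, c)\<close> and \<open>x[b, c) x[a, b)\<close> produces continuum many points of the subshift. Such points
  are coded by natural numbers \<open>c\<close>. By compactness, \<open>u\<close> is in the language of the asymptotic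
  set iff some \<open>x \<in> X\<close> shows \<open>u\<close> at the origin of \<open>f\<^sup>k x\<close> for infinitely many \<open>k\<close>. Hence
  \<open>u\<close> is in the language iff \<open>\<exists>c. \<forall>m. \<exists>l. W c m l u\<close>, where \<open>W\<close> says that \<open>c\<close> codes a point
  without forbidden words at \<open>\<plusminus>m\<close> and that \<open>l\<close> is a space-time diagram of \<open>f\<close> from that
  point, of depth at least \<open>m\<close>, ending in \<open>u\<close>. As \<open>f\<close> is given by a local rule, \<open>W\<close> only
  involves bounded quantifiers and is primitive recursive.\<close>

section \<open>Primitive recursive expressions\<close>

datatype pexp =
  Var nat | Const nat | Plus pexp pexp | Monus pexp pexp | Times pexp pexp
| Iter pexp pexp pexp

text \<open>\<open>Iter a s n\<close> runs the recursion \<open>acc\<^sub>0 = a\<close>, \<open>acc\<^sub>y\<^sub>+\<^sub>1 = s\<close>, where \<open>s\<close> is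
  evaluated in the environment extended by \<open>y\<close> and \<open>acc\<^sub>y\<close> (de Bruijn indices 0 and 1).\<close>

fun peval :: "pexp \<Rightarrow> nat list \<Rightarrow> nat" where
  "peval (Var i) env = (if i < length env then env ! i else 0)"
| "peval (Const n) env = n"
| "peval (Plus a b) env = peval a env + peval b env"
| "peval (Monus a b) env = peval a env - peval b env"
| "peval (Times a b) env = peval a env * peval b env"
| "peval (Iter a s n) env = rec_nat (peval a env) (\<lambda>y acc. peval s (y # acc # env)) (peval n env)"

lemma reval_Id: "i < length xs \<Longrightarrow> xs ! i = v \<Longrightarrow> reval (recf.Id i) xs v"
  using reval.idp by blast

fun rf_const :: "nat \<Rightarrow> recf" where
  "rf_const 0 = Zr"
| "rf_const (Suc n) = Cn Sc [rf_const n]"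

definition rf_add :: "recf" where
  "rf_add = Pr (Id 0) (Cn Sc [Id 1])"
definition rf_mult :: "recf" where
  "rf_mult = Pr Zr (Cn rf_add [Id 1, Id 2])"
definition rf_pred :: "recf" where
  "rf_pred = Pr Zr (Id 0)"
definition rf_monus :: "recf" where
  "rf_monus = Pr (Id 0) (Cn rf_pred [Id 1])"

lemma reval_rf_const: "reval (rf_const n) xs n"
  by (induction n) (auto intro: reval.intros)

lemma reval_rf_add: "reval rf_add [x, y] (x + y)"
proof (induction x)
  case 0 then show ?case unfolding rf_add_def by (auto intro!: reval.intros reval_Id)
next
  case (Suc x)
  have "reval (Cn Sc [Id 1]) [x, x + y, y] (Suc (x + y))"
    by (rule reval.cn[where ys="[x + y]"]) (auto intro!: reval.intros reval_Id)
  then show ?case using Suc unfolding rf_add_def by (auto intro: reval.prS)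
qed

lemma reval_rf_mult: "reval rf_mult [x, y] (x * y)"
proof (induction x)
  case 0 then show ?case unfolding rf_mult_def by (auto intro!: reval.intros reval_Id)
next
  case (Suc x)
  have "reval (Cn rf_add [Id 1, Id 2]) [x, x * y, y] (x * y + y)"
    by (rule reval.cn[where ys="[x * y, y]"]) (auto intro!: reval.intros reval_rf_add reval_Id)
  then show ?case using Suc unfolding rf_mult_def by (auto intro: reval.prS simp: add.commute)
qed

lemma reval_rf_pred: "reval rf_pred [x] (x - 1)"
proof (induction x)
  case 0 then show ?case unfolding rf_pred_def by (auto intro!: reval.intros)
next
  case (Suc n)
  then show ?case unfolding rf_pred_def
    by (auto intro!: reval.prS[where y="n - 1"] intro: reval.intros reval_Id)
qed

lemma reval_rf_monus: "reval rf_monus [y, x] (x - y)"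
proof (induction y)
  case 0 then show ?case unfolding rf_monus_def by (auto intro!: reval.intros reval_Id)
next
  case (Suc y)
  have "reval (Cn rf_pred [Id 1]) [y, x - y, x] (x - y - 1)"
    by (rule reval.cn[where ys="[x - y]"])
      (auto intro!: reval.intros reval_Id reval_rf_pred[of "x - y", simplified])
  then show ?case using Suc unfolding rf_monus_def by (auto intro: reval.prS)
qed

fun compile :: "nat \<Rightarrow> pexp \<Rightarrow> recf" where
  "compile k (Var i) = (if i < k then Id i else Zr)"
| "compile k (Const n) = rf_const n"
| "compile k (Plus a b) = Cn rf_add [compile k a, compile k b]"
| "compile k (Monus a b) = Cn rf_monus [compile k b, compile k a]"
| "compile k (Times a b) = Cn rf_mult [compile k a, compile k b]"
| "compile k (Iter a s n) =
     Cn (Pr (compile k a) (compile (k + 2) s)) (compile k n # map Id [0..<k])"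

lemma list_all2_reval_Ids: "list_all2 (\<lambda>g y. reval g env y) (map Id [0..<length env]) env"
  by (auto simp: list_all2_conv_all_nth intro: reval.idp)

lemma reval_compile: "length env = k \<Longrightarrow> reval (compile k a) env (peval a env)"
proof (induction a arbitrary: k env)
  case (Var i) then show ?case by (auto intro: reval.intros reval_Id)
next
  case (Const n) then show ?case by (simp add: reval_rf_const)
next
  case (Plus a b) then show ?case
    by (auto intro!: reval.cn[where ys="[peval a env, peval b env]"] reval_rf_add)
next
  case (Monus a b) then show ?case
    by (auto intro!: reval.cn[where ys="[peval b env, peval a env]"] reval_rf_monus)
next
  case (Times a b) then show ?case
    by (auto intro!: reval.cn[where ys="[peval a env, peval b env]"] reval_rf_mult)
next
  case (Iter a s n)
  let ?g = "\<lambda>y acc. peval s (y # acc # env)"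
  have rec: "reval (Pr (compile k a) (compile (k + 2) s)) (m # env) (rec_nat (peval a env) ?g m)" for m
  proof (induction m)
    case 0 then show ?case using Iter by (auto intro: reval.pr0)
  next
    case (Suc m)
    have "reval (compile (k + 2) s) (m # rec_nat (peval a env) ?g m # env)
        (?g m (rec_nat (peval a env) ?g m))"
      by (rule Iter.IH(2)) (use Iter.prems in simp)
    then show ?case using Suc by (auto intro: reval.prS)
  qed
  show ?case using Iter rec[of "peval n env"] list_all2_reval_Ids[of env]
    by (auto intro!: reval.cn[where ys="peval n env # env"])
qed

fun lift :: "nat \<Rightarrow> pexp \<Rightarrow> pexp" where
  "lift d (Var i) = (if i < d then Var i else Var (Suc i))"
| "lift d (Const n) = Const n"
| "lift d (Plus a b) = Plus (lift d a) (lift d b)"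
| "lift d (Monus a b) = Monus (lift d a) (lift d b)"
| "lift d (Times a b) = Times (lift d a) (lift d b)"
| "lift d (Iter a s n) = Iter (lift d a) (lift (d + 2) s) (lift d n)"

lemma peval_lift: "d \<le> length env \<Longrightarrow> peval (lift d a) (take d env @ z # drop d env) = peval a env"
proof (induction a arbitrary: d env)
  case (Var i) then show ?case by (auto simp: nth_append min_def)
next
  case (Iter a s n)
  have "peval (lift (d + 2) s) (y # acc # take d env @ z # drop d env) = peval s (y # acc # env)" for y acc
    using Iter.IH(2)[of "d + 2" "y # acc # env"] Iter.prems by simp
  then show ?case using Iter by simp
qed auto

lemma peval_lift0[simp]: "peval (lift 0 a) (z # env) = peval a env"
  using peval_lift[of 0 env a z] by simp

lemma peval_lift1[simp]: "peval (lift (Suc 0) a) (y # z # env) = peval a (y # env)"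
  using peval_lift[of 1 "y # env" a z] by simp

text \<open>Truth values are represented by nonzero numbers.\<close>

definition pSg :: "pexp \<Rightarrow> pexp" where
  "pSg a = Monus (Const 1) (Monus (Const 1) a)"
definition pNot :: "pexp \<Rightarrow> pexp" where
  "pNot a = Monus (Const 1) a"
definition pAnd :: "pexp \<Rightarrow> pexp \<Rightarrow> pexp" where
  "pAnd a b = Times (pSg a) (pSg b)"
definition pOr :: "pexp \<Rightarrow> pexp \<Rightarrow> pexp" where
  "pOr a b = pSg (Plus a b)"
definition pEq :: "pexp \<Rightarrow> pexp \<Rightarrow> pexp" where
  "pEq a b = pNot (Plus (Monus a b) (Monus b a))"
definition pLe :: "pexp \<Rightarrow> pexp \<Rightarrow> pexp" where
  "pLe a b = pNot (Monus a b)"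
definition pLt :: "pexp \<Rightarrow> pexp \<Rightarrow> pexp" where
  "pLt a b = pLe (Plus a (Const 1)) b"
definition pIf :: "pexp \<Rightarrow> pexp \<Rightarrow> pexp \<Rightarrow> pexp" where
  "pIf c a b = Plus (Times (pSg c) a) (Times (pNot c) b)"
definition pSum :: "pexp \<Rightarrow> pexp \<Rightarrow> pexp" where
  "pSum b a = Iter (Const 0) (Plus (Var 1) (lift 1 a)) b"
definition pAll :: "pexp \<Rightarrow> pexp \<Rightarrow> pexp" where
  "pAll b a = pEq (pSum b (pNot a)) (Const 0)"
definition pEx :: "pexp \<Rightarrow> pexp \<Rightarrow> pexp" where
  "pEx b a = pSg (pSum b a)"
definition pMu :: "pexp \<Rightarrow> pexp \<Rightarrow> pexp" where
  "pMu b a = pSum b (pAll (Plus (Var 0) (Const 1)) (pNot (lift 1 a)))"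
definition pMod :: "pexp \<Rightarrow> pexp \<Rightarrow> pexp" where
  "pMod a b =
  Iter (Const 0) (pIf (pEq (Plus (Var 1) (Const 1)) (lift 0 (lift 0 b))) (Const 0) (Plus (Var 1) (Const 1))) a"

fun pConj :: "pexp list \<Rightarrow> pexp" where
  "pConj [] = Const 1"
| "pConj (a # as) = pAnd a (pConj as)"

fun pDisj :: "pexp list \<Rightarrow> pexp" where
  "pDisj [] = Const 0"
| "pDisj (a # as) = pOr a (pDisj as)"

lemma peval_pSg[simp]: "peval (pSg a) env = of_bool (peval a env \<noteq> 0)"
  by (simp add: pSg_def)
lemma peval_pNot[simp]: "peval (pNot a) env = of_bool (peval a env = 0)"
  by (simp add: pNot_def)
lemma peval_pAnd[simp]: "peval (pAnd a b) env = of_bool (peval a env \<noteq> 0 \<and> peval b env \<noteq> 0)"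
  by (simp add: pAnd_def)
lemma peval_pOr[simp]: "peval (pOr a b) env = of_bool (peval a env \<noteq> 0 \<or> peval b env \<noteq> 0)"
  by (simp add: pOr_def)
lemma peval_pEq[simp]: "peval (pEq a b) env = of_bool (peval a env = peval b env)"
  by (simp add: pEq_def)
lemma peval_pLe[simp]: "peval (pLe a b) env = of_bool (peval a env \<le> peval b env)"
  by (simp add: pLe_def)
lemma peval_pLt[simp]: "peval (pLt a b) env = of_bool (peval a env < peval b env)"
  by (simp add: pLt_def)
lemma peval_pIf[simp]: "peval (pIf c a b) env = (if peval c env \<noteq> 0 then peval a env else peval b env)"
  by (simp add: pIf_def)

lemma peval_pSum[simp]: "peval (pSum b a) env = (\<Sum>y<peval b env. peval a (y # env))"
proof -
  have "rec_nat 0 (\<lambda>y acc. acc + peval a (y # env)) m = (\<Sum>y<m. peval a (y # env))" for m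
    by (induction m) auto
  then show ?thesis by (simp add: pSum_def)
qed

lemma peval_pAll[simp]: "peval (pAll b a) env = of_bool (\<forall>y<peval b env. peval a (y # env) \<noteq> 0)"
  by (auto simp add: pAll_def)

lemma peval_pEx[simp]: "peval (pEx b a) env = of_bool (\<exists>y<peval b env. peval a (y # env) \<noteq> 0)"
  by (simp add: pEx_def)

text \<open>Bounded minimisation: the number of \<open>y < b\<close> below every witness of \<open>a\<close>.\<close>

lemma peval_pMu:
  assumes "y0 < peval b env" "peval a (y0 # env) \<noteq> 0" "\<And>y. y < y0 \<Longrightarrow> peval a (y # env) = 0"
  shows "peval (pMu b a) env = y0"
proof -
  have "peval (pMu b a) env = (\<Sum>y<peval b env. of_bool (\<forall>z<y + 1. peval a (z # env) = 0))"
    by (simp add: pMu_def)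
  also have "\<dots> = card {y. y < peval b env \<and> (\<forall>z<y + 1. peval a (z # env) = 0)}"
    by (simp add: of_bool_def sum.If_cases Int_def)
  also have "{y. y < peval b env \<and> (\<forall>z<y + 1. peval a (z # env) = 0)} = {..<y0}"
  proof safe
    fix y assume "y < peval b env" "\<forall>z<y + 1. peval a (z # env) = 0"
    then show "y < y0" using assms(2) by (metis Suc_eq_plus1 less_Suc_eq_le not_less)
  qed (use assms in auto)
  finally show ?thesis by simp
qed

lemma peval_pMod[simp]: "peval (pMod a b) env = peval a env mod peval b env"
proof -
  have "rec_nat 0 (\<lambda>y acc. if acc + 1 = m then 0 else acc + 1) n = n mod m" for n m :: nat
    by (induction n) (auto simp: mod_Suc)
  then show ?thesis by (simp add: pMod_def cong: if_cong)
qed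

lemma peval_pConj[simp]: "peval (pConj as) env = of_bool (\<forall>a\<in>set as. peval a env \<noteq> 0)"
  by (induction as) auto

lemma peval_pDisj[simp]: "peval (pDisj as) env = of_bool (\<exists>a\<in>set as. peval a env \<noteq> 0)"
  by (induction as) auto

definition pTriangle :: "pexp \<Rightarrow> pexp" where
  "pTriangle a = pSum (Plus a (Const 1)) (Var 0)"
definition pPair :: "pexp \<Rightarrow> pexp \<Rightarrow> pexp" where
  "pPair a b = Plus (pTriangle (Plus a b)) a"

text \<open>Both components of \<open>prod_decode n\<close> are at most \<open>n\<close>, so bounded search finds them.\<close>

definition pFst :: "pexp \<Rightarrow> pexp" where
  "pFst n = pMu (Plus n (Const 1))
  (pEx (Plus (lift 0 n) (Const 1)) (pEq (pPair (Var 1) (Var 0)) (lift 0 (lift 0 n))))"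
definition pSnd :: "pexp \<Rightarrow> pexp" where
  "pSnd n = pMu (Plus n (Const 1))
  (pEx (Plus (lift 0 n) (Const 1)) (pEq (pPair (Var 0) (Var 1)) (lift 0 (lift 0 n))))"

lemma peval_pTriangle[simp]: "peval (pTriangle a) env = triangle (peval a env)"
proof -
  have "(\<Sum>y<m + 1. y) = triangle m" for m by (induction m) auto
  then show ?thesis by (simp add: pTriangle_def)
qed

lemma peval_pPair[simp]: "peval (pPair a b) env = prod_encode (peval a env, peval b env)"
  by (simp add: pPair_def prod_encode_def)

lemma peval_pFst[simp]: "peval (pFst n) env = fst (prod_decode (peval n env))"
proof -
  obtain x y where d: "prod_decode (peval n env) = (x, y)" by (cases "prod_decode (peval n env)")
  then have e: "prod_encode (x, y) = peval n env" by (metis prod_decode_inverse)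
  have "peval (pFst n) env = x" unfolding pFst_def
  proof (rule peval_pMu)
    show "x < peval (Plus n (Const 1)) env" using le_prod_encode_1[of x y] e by simp
    show "peval (pEx (Plus (lift 0 n) (Const 1)) (pEq (pPair (Var 1) (Var 0)) (lift 0 (lift 0 n)))) (x # env) \<noteq> 0"
      using le_prod_encode_2[of y x] e by (auto intro!: exI[of _ y])
  next
    fix z assume "z < x"
    then show "peval (pEx (Plus (lift 0 n) (Const 1)) (pEq (pPair (Var 1) (Var 0)) (lift 0 (lift 0 n)))) (z # env) = 0"
      using e by auto (metis Pair_inject less_irrefl prod_encode_eq)
  qed
  then show ?thesis using d by simp
qed

lemma peval_pSnd[simp]: "peval (pSnd n) env = snd (prod_decode (peval n env))"
proof -
  obtain x y where d: "prod_decode (peval n env) = (x, y)" by (cases "prod_decode (peval n env)")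
  then have e: "prod_encode (x, y) = peval n env" by (metis prod_decode_inverse)
  have "peval (pSnd n) env = y" unfolding pSnd_def
  proof (rule peval_pMu)
    show "y < peval (Plus n (Const 1)) env" using le_prod_encode_2[of y x] e by simp
    show "peval (pEx (Plus (lift 0 n) (Const 1)) (pEq (pPair (Var 0) (Var 1)) (lift 0 (lift 0 n)))) (y # env) \<noteq> 0"
      using le_prod_encode_1[of x y] e by (auto intro!: exI[of _ x])
  next
    fix z assume "z < y"
    then show "peval (pEx (Plus (lift 0 n) (Const 1)) (pEq (pPair (Var 0) (Var 1)) (lift 0 (lift 0 n)))) (z # env) = 0"
      using e by auto (metis Pair_inject less_irrefl prod_encode_eq)
  qed
  then show ?thesis using d by simp
qed

definition code_tl :: "nat \<Rightarrow> nat" where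
  "code_tl n = snd (prod_decode (n - 1))"

definition code_nth :: "nat \<Rightarrow> nat \<Rightarrow> nat" where
  "code_nth n i = fst (prod_decode ((code_tl ^^ i) n - 1))"

lemma code_nth_list_encode: "i < length xs \<Longrightarrow> code_nth (list_encode xs) i = xs ! i"
proof (induction xs arbitrary: i)
  case (Cons x xs)
  show ?case
  proof (cases i)
    case 0 then show ?thesis by (simp add: code_nth_def)
  next
    case (Suc j)
    have "code_tl (list_encode (x # xs)) = list_encode xs" by (simp add: code_tl_def)
    then have "code_nth (list_encode (x # xs)) i = code_nth (list_encode xs) j"
      by (simp only: code_nth_def Suc funpow_Suc_right comp_def)
    then show ?thesis using Cons Suc by simp
  qed
qed simp

lemma rec_nat_list_encode:
  "m \<le> n \<Longrightarrow> rec_nat 0 (\<lambda>t acc. Suc (prod_encode (g (n - 1 - t), acc))) m = list_encode (map g [n - m..<n])"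
proof (induction m)
  case (Suc m)
  have "[n - Suc m..<n] = (n - Suc m) # [Suc (n - Suc m)..<n]"
    using Suc.prems by (intro upt_conv_Cons) simp
  moreover have "Suc (n - Suc m) = n - m" using Suc.prems by simp
  moreover have "n - 1 - m = n - Suc m" by simp
  ultimately show ?case using Suc by simp
qed simp

definition pNth :: "pexp \<Rightarrow> pexp \<Rightarrow> pexp" where
  "pNth n i = pFst (Monus (Iter n (pSnd (Monus (Var 1) (Const 1))) i) (Const 1))"

lemma peval_pNth[simp]: "peval (pNth n i) env = code_nth (peval n env) (peval i env)"
proof -
  have "rec_nat a (\<lambda>y acc. code_tl acc) m = (code_tl ^^ m) a" for a m
    by (induction m) auto
  then show ?thesis by (simp add: pNth_def code_nth_def code_tl_def)
qed

section \<open>Configurations\<close>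

definition central_block :: "nat \<Rightarrow> 'a config \<Rightarrow> 'a list" where
  "central_block M x = map (\<lambda>t. x (int t - int M)) [0..<2 * M + 1]"

lemma agree_on_iff_central_block: "agree_on M x y \<longleftrightarrow> central_block M x = central_block M y"
proof
  assume "agree_on M x y" then show "central_block M x = central_block M y"
    unfolding central_block_def agree_on_def by (auto intro!: map_cong)
next
  assume h: "central_block M x = central_block M y"
  show "agree_on M x y" unfolding agree_on_def
  proof (intro allI impI)
    fix i :: int assume "\<bar>i\<bar> \<le> int M"
    then have t: "nat (i + int M) < 2 * M + 1" "int (nat (i + int M)) - int M = i" by auto
    have nth: "central_block M z ! k = z (int k - int M)" if "k < 2 * M + 1" for z :: "'a config" and k
      using that unfolding central_block_def by (simp del: upt_Suc)
    have "central_block M x ! nat (i + int M) = central_block M y ! nat (i + int M)" using h by simp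
    then show "x i = y i" using nth[OF t(1), of x] nth[OF t(1), of y] t(2) by simp
  qed
qed

lemma agree_on_sym: "agree_on M x y \<Longrightarrow> agree_on M y x"
  by (auto simp: agree_on_def)

lemma agree_on_trans: "agree_on M x y \<Longrightarrow> agree_on M y z \<Longrightarrow> agree_on M x z"
  by (auto simp: agree_on_def)

lemma agree_on_mono: "agree_on M x y \<Longrightarrow> M' \<le> M \<Longrightarrow> agree_on M' x y"
  by (auto simp: agree_on_def)

lemma finite_lists_of_length: "finite {xs :: ('a::finite) list. length xs = n}"
  using finite_lists_length_eq[of "UNIV :: 'a set" n] by simp

lemma finite_range_central_block: "finite (range (central_block M :: ('a::finite) config \<Rightarrow> 'a list))"
  by (rule finite_subset[OF _ finite_lists_of_length[of "2 * M + 1"]]) (auto simp: central_block_def)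

lemma infinite_agree_on_refine:
  fixes s :: "nat \<Rightarrow> ('a::finite) config"
  assumes "infinite J"
  shows "\<exists>j0\<in>J. infinite {j\<in>J. agree_on M (s j0) (s j)}"
proof -
  have "finite ((central_block M \<circ> s) ` J)"
    by (rule finite_subset[OF _ finite_range_central_block[of M]]) auto
  from pigeonhole_infinite[OF assms this] obtain j0 where
    "j0 \<in> J" "infinite {j \<in> J. (central_block M \<circ> s) j = (central_block M \<circ> s) j0}" by blast
  then show ?thesis
    by (auto simp: agree_on_iff_central_block intro!: bexI[of _ j0]
        elim!: rev_iffD1[OF _ arg_cong[where f=infinite]])
qed

lemma infinite_agree_on_Suc:
  fixes s :: "nat \<Rightarrow> ('a::finite) config"
  assumes "infinite {j. agree_on M p (s j)}"
  shows "\<exists>q. agree_on M q p \<and> infinite {j. agree_on (Suc M) q (s j)}"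
proof -
  from infinite_agree_on_refine[OF assms, where s=s and M="Suc M"] obtain j0 where
    j0: "agree_on M p (s j0)" "infinite {j \<in> {j. agree_on M p (s j)}. agree_on (Suc M) (s j0) (s j)}"
    by auto
  have "infinite {j. agree_on (Suc M) (s j0) (s j)}"
    using j0(2) by (rule infinite_super[rotated]) auto
  then show ?thesis using j0(1) by (auto intro!: exI[of _ "s j0"] agree_on_sym)
qed

lemma nested_agree_on_limit:
  assumes nested: "\<And>M. agree_on M (P (Suc M)) (P M)"
  shows "agree_on M (\<lambda>i. P (nat \<bar>i\<bar>) i) (P M)"
proof -
  have P_add: "agree_on M (P (M + d)) (P M)" for M d
  proof (induction d)
    case (Suc d)
    then show ?case using agree_on_mono[OF nested[of "M + d"], of M] by (auto intro: agree_on_trans)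
  qed (simp add: agree_on_def)
  show ?thesis unfolding agree_on_def
  proof (intro allI impI)
    fix i :: int assume i: "\<bar>i\<bar> \<le> int M"
    have "agree_on (nat \<bar>i\<bar>) (P (nat \<bar>i\<bar> + (M - nat \<bar>i\<bar>))) (P (nat \<bar>i\<bar>))" by (rule P_add)
    moreover have "nat \<bar>i\<bar> + (M - nat \<bar>i\<bar>) = M" using i by auto
    ultimately show "P (nat \<bar>i\<bar>) i = P M i" by (auto simp: agree_on_def)
  qed
qed

text \<open>The cluster point is the limit of nested cylinders, each containing infinitely many terms.\<close>

lemma cluster_point:
  fixes s :: "nat \<Rightarrow> ('a::finite) config"
  shows "\<exists>z. \<forall>M. infinite {j. agree_on M z (s j)}"
proof -
  obtain p0 where p0: "infinite {j. agree_on 0 p0 (s j)}"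
    using infinite_agree_on_refine[of UNIV, where s=s and M=0] by auto
  define P where "P = rec_nat p0 (\<lambda>M p. SOME q. agree_on M q p \<and> infinite {j. agree_on (Suc M) q (s j)})"
  have P_infinite: "infinite {j. agree_on M (P M) (s j)}" for M
  proof (induction M)
    case 0 then show ?case using p0 by (simp add: P_def)
  next
    case (Suc M)
    then show ?case using someI_ex[OF infinite_agree_on_Suc[OF Suc]] by (simp add: P_def)
  qed
  have "agree_on M (P (Suc M)) (P M)" for M
    using someI_ex[OF infinite_agree_on_Suc[OF P_infinite[of M]]] by (simp add: P_def)
  then have limit: "agree_on M (\<lambda>i. P (nat \<bar>i\<bar>) i) (P M)" for M
    by (rule nested_agree_on_limit)
  have "infinite {j. agree_on M (\<lambda>i. P (nat \<bar>i\<bar>) i) (s j)}" for M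
    using P_infinite[of M] by (rule infinite_super[rotated]) (auto intro: agree_on_trans[OF limit])
  then show ?thesis by blast
qed

lemma cluster_point_frequently:
  "infinite {j::nat. agree_on M z (s j)} \<Longrightarrow> \<exists>j\<ge>n. agree_on M z (s j)"
  using infinite_nat_iff_unbounded_le by auto

definition translate :: "int \<Rightarrow> 'a config \<Rightarrow> 'a config" where
  "translate i x = (\<lambda>j. x (j + i))"

definition shift_invariant :: "'a config set \<Rightarrow> bool" where
  "shift_invariant X \<longleftrightarrow> (\<forall>x\<in>X. \<forall>i. translate i x \<in> X)"

definition avoid :: "'a list set \<Rightarrow> 'a config set" where
  "avoid F = {x. \<forall>w\<in>F. \<forall>i. \<not> occurs_at w x i}"

lemma is_SFT_iff_avoid: "is_SFT X \<longleftrightarrow> (\<exists>F. finite F \<and> X = avoid F)"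
  by (simp add: is_SFT_def avoid_def)

lemma occurs_at_iff_nth: "occurs_at w x i \<longleftrightarrow> (\<forall>t<length w. x (i + int t) = w ! t)"
  unfolding occurs_at_def list_eq_iff_nth_eq by simp

lemma occurs_at_translate: "occurs_at w (translate i x) j \<longleftrightarrow> occurs_at w x (j + i)"
  unfolding occurs_at_iff_nth translate_def by (simp add: ac_simps)

lemma shift_invariant_avoid: "shift_invariant (avoid F)"
  by (simp add: shift_invariant_def avoid_def occurs_at_translate)

lemma cl_avoid_subset: "cl (avoid F) \<subseteq> avoid F"
proof
  fix z assume z: "z \<in> cl (avoid F)"
  { fix w i assume w: "w \<in> F" and occ: "occurs_at w z i"
    obtain x where x: "x \<in> avoid F" "agree_on (nat \<bar>i\<bar> + length w) z x"
      using z by (auto simp: cl_def)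
    have "occurs_at w x i" unfolding occurs_at_iff_nth
    proof (intro allI impI)
      fix t assume t: "t < length w"
      have "\<bar>i + int t\<bar> \<le> int (nat \<bar>i\<bar> + length w)" using t by auto
      then have "z (i + int t) = x (i + int t)" using x(2) by (auto simp: agree_on_def)
      then show "x (i + int t) = w ! t" using occ t by (auto simp: occurs_at_iff_nth)
    qed
    then have False using x(1) w by (auto simp: avoid_def) }
  then show "z \<in> avoid F" by (auto simp: avoid_def)
qed

definition block_closed :: "'a config set \<Rightarrow> nat \<Rightarrow> bool" where
  "block_closed X N \<longleftrightarrow>
     (\<forall>x\<in>X. \<forall>y. (\<forall>i. \<exists>j. \<forall>t<N. y (i + int t) = x (j + int t)) \<longrightarrow> y \<in> X)"

lemma block_closed_avoid:
  assumes "\<forall>w\<in>F. length w \<le> N"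
  shows "block_closed (avoid F) N"
  unfolding block_closed_def
proof (intro ballI allI impI)
  fix x y assume x: "x \<in> avoid F" and y: "\<forall>i. \<exists>j. \<forall>t<N. y (i + int t) = x (j + int t)"
  { fix w i assume w: "w \<in> F" and occ: "occurs_at w y i"
    obtain j where "\<forall>t<N. y (i + int t) = x (j + int t)" using y by blast
    then have "occurs_at w x j" using occ assms w by (auto simp: occurs_at_iff_nth)
    then have False using x w by (auto simp: avoid_def) }
  then show "y \<in> avoid F" by (auto simp: avoid_def)
qed

lemma avoid_bounded_words:
  assumes "finite F"
  obtains N where "0 < N" "block_closed (avoid F) N"
proof
  define N where "N = Suc (Max (insert 0 (length ` F)))"
  show "0 < N" by (simp add: N_def)
  have "\<forall>w\<in>F. length w \<le> N" using assms by (auto simp: N_def intro: le_SucI)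
  then show "block_closed (avoid F) N" by (rule block_closed_avoid)
qed

section \<open>Cellular automata\<close>

lemma translate_Suc: "translate (int (Suc n)) x = shift (translate (int n) x)"
  by (simp add: shift_def translate_def algebra_simps)

lemma ca_translate_nat:
  assumes f: "cellular_automaton X f" and X: "shift_invariant X" and x: "x \<in> X"
  shows "f (translate (int n) x) = translate (int n) (f x)"
proof (induction n)
  case 0 then show ?case by (simp add: translate_def)
next
  case (Suc n)
  have "translate (int n) x \<in> X" using X x by (simp add: shift_invariant_def)
  then have "f (shift (translate (int n) x)) = shift (f (translate (int n) x))"
    using f by (auto simp: cellular_automaton_def)
  then show ?case using Suc by (simp add: translate_Suc shift_def translate_def algebra_simps)
qed

lemma ca_at_translate:
  assumes f: "cellular_automaton X f" and X: "shift_invariant X" and x: "x \<in> X"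
  shows "f x i = f (translate i x) 0"
proof (cases "i \<ge> 0")
  case True
  then obtain n where "i = int n" by (metis nonneg_eq_int)
  then show ?thesis using ca_translate_nat[OF assms, of n] by (simp add: translate_def)
next
  case False
  define n where "n = nat (- i)"
  have n: "i = - int n" using False by (simp add: n_def)
  define y where "y = translate i x"
  have y: "y \<in> X" using X x by (simp add: shift_invariant_def y_def)
  have "x = translate (int n) y" by (simp add: y_def translate_def n)
  then have "f x = translate (int n) (f y)" using ca_translate_nat[OF f X y, of n] by simp
  then show ?thesis by (simp add: translate_def n y_def)
qed

text \<open>Otherwise a sequence of counterexamples has a cluster point in \<open>X\<close> at which \<open>f\<close> is
  discontinuous.\<close>

lemma ca_uniformly_continuous_at_origin:
  fixes X :: "('a::finite) config set"
  assumes f: "cellular_automaton X f" and X: "cl X \<subseteq> X"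
  shows "\<exists>M. \<forall>x\<in>X. \<forall>y\<in>X. agree_on M x y \<longrightarrow> f x 0 = f y 0"
proof (rule ccontr)
  assume "\<not> ?thesis"
  then have "\<forall>M. \<exists>p. fst p \<in> X \<and> snd p \<in> X \<and> agree_on M (fst p) (snd p) \<and> f (fst p) 0 \<noteq> f (snd p) 0"
    by fastforce
  then obtain p where p: "\<And>M. fst (p M) \<in> X \<and> snd (p M) \<in> X \<and> agree_on M (fst (p M)) (snd (p M))
      \<and> f (fst (p M)) 0 \<noteq> f (snd (p M)) 0" by metis
  obtain z where z: "\<And>M. infinite {j. agree_on M z (fst (p j))}"
    using cluster_point[of "\<lambda>j. fst (p j)"] by blast
  have frequently: "\<exists>j\<ge>n. agree_on M z (fst (p j))" for M n
    using cluster_point_frequently[OF z] .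
  have "z \<in> cl X"
    unfolding cl_def using frequently p by blast
  then have "z \<in> X" using X by blast
  then obtain M where M: "\<forall>y\<in>X. agree_on M z y \<longrightarrow> agree_on 0 (f z) (f y)"
    using f unfolding cellular_automaton_def cont_on_def by blast
  obtain j where j: "j \<ge> M" "agree_on M z (fst (p j))" using frequently by blast
  have "agree_on M z (snd (p j))"
    using j p[of j] by (auto intro: agree_on_trans agree_on_mono)
  then have "f z 0 = f (snd (p j)) 0" using M p[of j] by (auto simp: agree_on_def)
  moreover have "f z 0 = f (fst (p j)) 0" using M p[of j] j by (auto simp: agree_on_def)
  ultimately show False using p[of j] by simp
qed

theorem ca_local_rule:
  fixes X :: "('a::finite) config set"
  assumes f: "cellular_automaton X f" and "shift_invariant X" and "cl X \<subseteq> X"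
  shows "\<exists>r \<phi>. \<forall>x\<in>X. \<forall>i. f x i = \<phi> (map (\<lambda>t. x (i - int r + int t)) [0..<2 * r + 1])"
proof -
  obtain M where M: "\<forall>x\<in>X. \<forall>y\<in>X. agree_on M x y \<longrightarrow> f x 0 = f y 0"
    using ca_uniformly_continuous_at_origin[OF f assms(3)] by blast
  define \<phi> where "\<phi> u = f (SOME x. x \<in> X \<and> central_block M x = u) 0" for u
  have "f x i = \<phi> (map (\<lambda>t. x (i - int M + int t)) [0..<2 * M + 1])" if x: "x \<in> X" for x i
  proof -
    let ?x = "translate i x"
    have x': "?x \<in> X" using x assms(2) by (simp add: shift_invariant_def)
    have block: "central_block M ?x = map (\<lambda>t. x (i - int M + int t)) [0..<2 * M + 1]"
      by (simp add: central_block_def translate_def algebra_simps)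
    let ?y = "SOME y. y \<in> X \<and> central_block M y = central_block M ?x"
    have "\<exists>y. y \<in> X \<and> central_block M y = central_block M ?x" using x' by blast
    then have "?y \<in> X" "agree_on M ?x ?y"
      unfolding agree_on_iff_central_block by (metis (mono_tags, lifting) someI_ex)+
    then have "f ?x 0 = f ?y 0" using M x' by blast
    then show ?thesis unfolding block[symmetric] using ca_at_translate[OF f assms(2) x, of i]
      by (simp only: \<phi>_def)
  qed
  then show ?thesis by blast
qed

section \<open>The language of the asymptotic set\<close>

definition window :: "'a config \<Rightarrow> nat \<Rightarrow> 'a list" where
  "window y n = map (\<lambda>j. y (int j)) [0..<n]"

lemma window_agree_on: "agree_on n y z \<Longrightarrow> window y n = window z n"
  unfolding window_def agree_on_def by (intro map_cong) auto

lemma length_window[simp]: "length (window y n) = n"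
  by (simp add: window_def)

lemma window_in_omega_limit_iff:
  fixes x :: "('a::finite) config" and f :: "'a config \<Rightarrow> 'a config"
  shows "(\<exists>y\<in>(\<Inter>n. cl {(f ^^ k) x | k. k \<ge> n}). window y (length u) = u)
     \<longleftrightarrow> (\<forall>n. \<exists>k\<ge>n. window ((f ^^ k) x) (length u) = u)"
proof
  assume "\<exists>y\<in>(\<Inter>n. cl {(f ^^ k) x | k. k \<ge> n}). window y (length u) = u"
  then obtain y where y: "\<And>n. y \<in> cl {(f ^^ k) x | k. k \<ge> n}" "window y (length u) = u" by blast
  show "\<forall>n. \<exists>k\<ge>n. window ((f ^^ k) x) (length u) = u"
  proof
    fix n
    obtain k where "k \<ge> n" "agree_on (length u) y ((f ^^ k) x)"
      using y(1)[of n] unfolding cl_def by blast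
    then show "\<exists>k\<ge>n. window ((f ^^ k) x) (length u) = u" using y(2) window_agree_on by metis
  qed
next
  assume "\<forall>n. \<exists>k\<ge>n. window ((f ^^ k) x) (length u) = u"
  then obtain k where k: "\<And>n. k n \<ge> n \<and> window ((f ^^ k n) x) (length u) = u" by metis
  obtain z where z: "\<And>M. infinite {j. agree_on M z ((f ^^ k j) x)}"
    using cluster_point[of "\<lambda>j. (f ^^ k j) x"] by blast
  have frequently: "\<exists>j\<ge>n. agree_on M z ((f ^^ k j) x)" for M n
    using cluster_point_frequently[OF z] .
  have "z \<in> cl {(f ^^ k) x | k. k \<ge> n}" for n
    unfolding cl_def
  proof safe
    fix M obtain j where j: "j \<ge> n" "agree_on M z ((f ^^ k j) x)" using frequently by blast
    then have "(f ^^ k j) x \<in> {(f ^^ k) x | k. k \<ge> n}" using k[of j] by auto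
    then show "\<exists>y\<in>{(f ^^ k) x | k. k \<ge> n}. agree_on M z y" using j(2) by blast
  qed
  moreover have "window z (length u) = u"
  proof -
    obtain j where "agree_on (length u) z ((f ^^ k j) x)" using frequently by blast
    then show ?thesis using k[of j] by (simp add: window_agree_on)
  qed
  ultimately show "\<exists>y\<in>(\<Inter>n. cl {(f ^^ k) x | k. k \<ge> n}). window y (length u) = u" by blast
qed

theorem language_asymptotic_set_iff:
  fixes X :: "('a::finite) config set"
  shows "u \<in> language (asymptotic_set X f) \<longleftrightarrow>
    (\<exists>x\<in>X. \<forall>n. \<exists>k\<ge>n. window ((f ^^ k) x) (length u) = u)"
proof -
  have language: "u \<in> language Y \<longleftrightarrow> (\<exists>y\<in>Y. window y (length u) = u)" for Y :: "'a config set"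
  proof
    assume "u \<in> language Y"
    then obtain y k where "y \<in> Y" "u = map (\<lambda>j. y (int j)) [0..<k]" by (auto simp: language_def)
    then show "\<exists>y\<in>Y. window y (length u) = u" by (auto simp: window_def)
  next
    assume "\<exists>y\<in>Y. window y (length u) = u"
    then show "u \<in> language Y" unfolding language_def window_def by (metis (mono_tags) mem_Collect_eq)
  qed
  have "u \<in> language (asymptotic_set X f) \<longleftrightarrow>
    (\<exists>x\<in>X. \<exists>y\<in>(\<Inter>n. cl {(f ^^ k) x | k. k \<ge> n}). window y (length u) = u)"
    unfolding language asymptotic_set_def by blast
  moreover have "\<And>x. (\<exists>y\<in>(\<Inter>n. cl {(f ^^ k) x | k. k \<ge> n}). window y (length u) = u)
     \<longleftrightarrow> (\<forall>n. \<exists>k\<ge>n. window ((f ^^ k) x) (length u) = u)"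
    by (rule window_in_omega_limit_iff)
  ultimately show ?thesis by simp
qed

section \<open>Points of countable subshifts are eventually periodic\<close>

lemma uncountable_nat_predicates: "uncountable (UNIV :: (nat \<Rightarrow> bool) set)"
proof
  assume "countable (UNIV :: (nat \<Rightarrow> bool) set)"
  then obtain g :: "nat \<Rightarrow> nat \<Rightarrow> bool" where g: "range g = UNIV"
    by (metis uncountable_def UNIV_not_empty)
  have "(\<lambda>n. Collect (g n)) ` UNIV = Pow UNIV"
  proof -
    have "S = Collect (g (inv g (\<lambda>m. m \<in> S)))" for S :: "nat set"
      using g by (simp add: f_inv_into_f)
    then show ?thesis by auto
  qed
  then show False using Cantors_theorem by blast
qed

text \<open>\<open>splice s\<close> continues \<open>x\<close> from \<open>a\<close> on by segments of length \<open>c - a\<close>, the \<open>j\<close>-th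
  being \<open>x[a, c)\<close> if \<open>s j\<close> and \<open>x[b, c) x[a, b)\<close> otherwise. As the \<open>N\<close>-block at \<open>a\<close> recurs
  at \<open>b\<close> and \<open>c\<close>, all its \<open>N\<close>-blocks are \<open>N\<close>-blocks of \<open>x\<close>.\<close>

locale recurring_block =
  fixes x :: "'a config" and N :: nat and a b c :: int
  assumes N_pos: "0 < N" and gap_ab: "int N \<le> b - a" and gap_bc: "int N \<le> c - b"
    and block_b: "\<And>m. 0 \<le> m \<Longrightarrow> m < int N \<Longrightarrow> x (b + m) = x (a + m)"
    and block_c: "\<And>m. 0 \<le> m \<Longrightarrow> m < int N \<Longrightarrow> x (c + m) = x (a + m)"
begin

definition segment :: "bool \<Rightarrow> int \<Rightarrow> 'a" where
  "segment B t = (if B then x (a + t) else if t < c - b then x (b + t) else x (a + t - (c - b)))"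

definition splice :: "(nat \<Rightarrow> bool) \<Rightarrow> 'a config" where
  "splice s i = (if i < a then x i else segment (s (nat ((i - a) div (c - a)))) ((i - a) mod (c - a)))"

lemma gap_ac_pos: "0 < c - a"
  using N_pos gap_ab gap_bc by simp

lemma splice_at:
  assumes "0 \<le> J" "0 \<le> r" "r < c - a"
  shows "splice s (a + (J * (c - a) + r)) = segment (s (nat J)) r"
proof -
  have "(r + J * (c - a)) div (c - a) = J" "(r + J * (c - a)) mod (c - a) = r"
    using assms gap_ac_pos by simp_all
  moreover have "0 \<le> J * (c - a)" using assms gap_ac_pos by simp
  then have "\<not> a + (J * (c - a) + r) < a" using assms by linarith
  ultimately show ?thesis by (simp add: splice_def add.commute)
qed

lemma segment_start: "0 \<le> m \<Longrightarrow> m < int N \<Longrightarrow> segment B m = x (a + m)"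
  using block_b gap_bc by (auto simp: segment_def)

lemma segment_window:
  assumes "0 \<le> r" "r < c - a"
  shows "\<exists>j. \<forall>t<N. (if r + int t < c - a then segment B (r + int t) else x (a + (r + int t - (c - a))))
    = x (j + int t)"
proof (intro exI allI impI)
  fix t assume t: "t < N"
  define j where "j = (if B then a + r else if r < c - b then b + r else a + r - (c - b))"
  define m where "m = r + int t - (c - b)"
  show "(if r + int t < c - a then segment B (r + int t) else x (a + (r + int t - (c - a))))
    = x (j + int t)"
  proof (cases "r + int t < c - a")
    case True
    have "x (a + m) = x (b + (r + int t))" if "\<not> B" "r < c - b" "\<not> r + int t < c - b"
      using block_c[of m] that t by (simp add: m_def algebra_simps)
    then show ?thesis using True by (auto simp: segment_def j_def m_def algebra_simps)
  next
    case False
    define m' where "m' = r + int t - (c - a)"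
    have m': "0 \<le> m'" "m' < int N" using False assms t by (auto simp: m'_def)
    have "\<not> r < c - b" using False t gap_ab by simp
    then have "j + int t = c + m' \<or> j + int t = b + m'"
      using False t gap_ab by (auto simp: j_def m'_def)
    then show ?thesis using False block_b[OF m'] block_c[OF m'] unfolding m'_def[symmetric] by auto
  qed
qed

lemma splice_window: "\<exists>j. \<forall>t<N. splice s (i + int t) = x (j + int t)"
proof (cases "i < a")
  case True
  have "splice s (i + int t) = x (i + int t)" if t: "t < N" for t
  proof (cases "i + int t < a")
    case False
    define q where "q = i + int t - a"
    have q: "0 \<le> q" "q < int N" "q < c - a" using False t True gap_ab gap_bc by (auto simp: q_def)
    have "splice s (a + (0 * (c - a) + q)) = segment (s 0) q" using splice_at[of 0 q] q by simp
    then show ?thesis using segment_start[OF q(1,2)] by (simp add: q_def)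
  qed (simp add: splice_def)
  then show ?thesis by blast
next
  case False
  define J where "J = (i - a) div (c - a)"
  define r where "r = (i - a) mod (c - a)"
  have J: "0 \<le> J" using False gap_ac_pos by (simp add: J_def pos_imp_zdiv_nonneg_iff)
  have r: "0 \<le> r" "r < c - a" using gap_ac_pos by (auto simp: r_def)
  have i: "i = a + (J * (c - a) + r)" using div_mult_mod_eq[of "i - a" "c - a"] by (simp add: J_def r_def)
  obtain j where j: "\<forall>t<N. (if r + int t < c - a then segment (s (nat J)) (r + int t)
      else x (a + (r + int t - (c - a)))) = x (j + int t)"
    using segment_window[OF r] by blast
  have "splice s (i + int t) = (if r + int t < c - a then segment (s (nat J)) (r + int t)
      else x (a + (r + int t - (c - a))))" if t: "t < N" for t
  proof (cases "r + int t < c - a")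
    case True
    then show ?thesis using splice_at[OF J, of "r + int t" s] r by (simp add: i algebra_simps)
  next
    case False
    define m where "m = r + int t - (c - a)"
    have m: "0 \<le> m" "m < int N" "m < c - a" using False r t gap_ab gap_bc by (auto simp: m_def)
    have "i + int t = a + ((J + 1) * (c - a) + m)" by (simp add: i m_def algebra_simps)
    then have "splice s (i + int t) = segment (s (nat (J + 1))) m"
      using splice_at[of "J + 1" m s] J m by simp
    then show ?thesis using False segment_start[OF m(1,2)] by (simp add: m_def)
  qed
  then show ?thesis using j by auto
qed

lemma splice_injective:
  assumes "0 \<le> t" "t < c - b" "x (b + t) \<noteq> x (a + t)"
  shows "inj splice"
proof (rule injI, rule ccontr)
  fix s s' assume eq: "splice s = splice s'" and "s \<noteq> s'"
  then obtain J where J: "s J \<noteq> s' J" by blast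
  have "t < c - a" using assms gap_ab N_pos by simp
  then have "splice s'' (a + (int J * (c - a) + t)) = segment (s'' J) t" for s''
    using splice_at[of "int J" t s''] assms by simp
  then have "segment (s J) t = segment (s' J) t" using eq by metis
  then show False using J assms by (cases "s J") (simp_all add: segment_def)
qed

end

text \<open>Otherwise the points \<open>splice s\<close> would form an uncountable subset of \<open>X\<close>.\<close>

lemma (in recurring_block) recurring_block_repeats:
  assumes "block_closed X N" "x \<in> X" "countable X" "0 \<le> t" "t < c - b"
  shows "x (b + t) = x (a + t)"
proof (rule ccontr)
  assume "x (b + t) \<noteq> x (a + t)"
  then have "inj splice" using splice_injective assms(4,5) by blast
  moreover have "range splice \<subseteq> X"
    using assms(1,2) splice_window unfolding block_closed_def by blast
  then have "countable (range splice)" using assms(3) countable_subset by blast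
  ultimately show False
    using uncountable_nat_predicates countable_image_inj_on by blast
qed

lemma countable_block_closed_periodic_right:
  fixes X :: "('a::finite) config set"
  assumes X: "block_closed X N" "countable X" and N: "0 < N" and x: "x \<in> X"
  shows "\<exists>a p. 0 < p \<and> (\<forall>i\<ge>a. x (i + p) = x i)"
proof -
  define B where "B n = map (\<lambda>t. x (int n + int t)) [0..<N]" for n :: nat
  have "finite (range B)"
    by (rule finite_subset[OF _ finite_lists_of_length[of N]]) (auto simp: B_def)
  from pigeonhole_infinite[OF infinite_UNIV_nat this] obtain n0 where
    "infinite {n. B n = B n0}" by auto
  then have S: "\<exists>n\<ge>k. B n = B n0" for k
    using infinite_nat_iff_unbounded_le by auto
  have block: "x (int n + m) = x (int n0 + m)" if "B n = B n0" "0 \<le> m" "m < int N" for n m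
  proof -
    have "B n ! nat m = B n0 ! nat m" using that by simp
    then show ?thesis using that by (simp add: B_def)
  qed
  obtain b where b: "B b = B n0" "b \<ge> n0 + N" using S by blast
  have "x (i + (int b - int n0)) = x i" if i: "i \<ge> int n0" for i
  proof -
    obtain c where c: "B c = B n0" "c \<ge> b + N + nat (i - int n0) + 1" using S by blast
    interpret recurring_block x N "int n0" "int b" "int c"
    proof
      show "0 < N" "int N \<le> int b - int n0" "int N \<le> int c - int b" using N b c by auto
      show "x (int b + m) = x (int n0 + m)" "x (int c + m) = x (int n0 + m)"
        if "0 \<le> m" "m < int N" for m
        using block[OF b(1) that] block[OF c(1) that] by simp_all
    qed
    have "x (int b + (i - int n0)) = x (int n0 + (i - int n0))"
      by (rule recurring_block_repeats[OF X(1) x X(2)]) (use c i in auto)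
    then show ?thesis by (simp add: algebra_simps)
  qed
  moreover have "0 < int b - int n0" using b N by simp
  ultimately show ?thesis by blast
qed

definition reflect :: "'a config \<Rightarrow> 'a config" where
  "reflect x = (\<lambda>i. x (- i))"

lemma reflect_reflect[simp]: "reflect (reflect x) = x"
  by (simp add: reflect_def)

lemma block_closed_reflect:
  assumes X: "block_closed X N"
  shows "block_closed (reflect ` X) N"
  unfolding block_closed_def
proof (intro ballI allI impI)
  fix x' y assume x': "x' \<in> reflect ` X" and y: "\<forall>i. \<exists>j. \<forall>t<N. y (i + int t) = x' (j + int t)"
  then obtain x where x: "x \<in> X" "x' = reflect x" by blast
  have "\<exists>j. \<forall>t<N. reflect y (i + int t) = x (j + int t)" for i
  proof -
    obtain j where j: "\<forall>t<N. y (- i - (int N - 1) + int t) = x' (j + int t)" using y by blast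
    show ?thesis
    proof (intro exI[of _ "- j - (int N - 1)"] allI impI)
      fix t assume t: "t < N"
      have "N - 1 - t < N" using t by simp
      then have "y (- i - (int N - 1) + int (N - 1 - t)) = x' (j + int (N - 1 - t))" using j by blast
      moreover have "int (N - 1 - t) = int N - 1 - int t" using t by simp
      ultimately show "reflect y (i + int t) = x (- j - (int N - 1) + int t)"
        using x by (simp add: reflect_def algebra_simps)
    qed
  qed
  then have "reflect y \<in> X" using X x(1) unfolding block_closed_def by blast
  then show "y \<in> reflect ` X" by (metis image_eqI reflect_reflect)
qed

lemma countable_block_closed_periodic_left:
  fixes X :: "('a::finite) config set"
  assumes X: "block_closed X N" "countable X" and N: "0 < N" and x: "x \<in> X"
  shows "\<exists>a p. 0 < p \<and> (\<forall>i\<le>a. x (i - p) = x i)"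
proof -
  obtain a p where p: "0 < p" "\<forall>i\<ge>a. reflect x (i + p) = reflect x i"
    using countable_block_closed_periodic_right[OF block_closed_reflect[OF X(1)] _ N, of "reflect x"]
      X(2) x by blast
  have "x (i - p) = x i" if "i \<le> - a" for i
    using p(2)[rule_format, of "- i"] that by (simp add: reflect_def)
  then show ?thesis using p(1) by blast
qed

lemma periodic_right_mult:
  fixes x :: "'a config"
  assumes "\<forall>i\<ge>a. x (i + p) = x i" "0 < p" "i \<ge> a"
  shows "x (i + int k * p) = x i"
proof (induction k)
  case (Suc k)
  have "0 \<le> int k * p" using assms(2) by simp
  then have "i + int k * p \<ge> a" using assms(3) by linarith
  then have "x (i + int k * p + p) = x (i + int k * p)" using assms(1) by blast
  then show ?case using Suc by (simp add: algebra_simps)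
qed simp

lemma periodic_left_mult:
  fixes x :: "'a config"
  assumes "\<forall>i\<le>a. x (i - p) = x i" "0 < p" "i \<le> a"
  shows "x (i - int k * p) = x i"
proof (induction k)
  case (Suc k)
  have "0 \<le> int k * p" using assms(2) by simp
  then have "i - int k * p \<le> a" using assms(3) by linarith
  then have "x (i - int k * p - p) = x (i - int k * p)" using assms(1) by blast
  then show ?case using Suc by (simp add: algebra_simps)
qed simp

lemma periodic_right_mod:
  fixes x :: "'a config"
  assumes right: "\<forall>i\<ge>a. x (i + P) = x i" and P: "0 < P" and "a + P \<le> M" "M \<le> i"
  shows "x i = x (M - P + (i - M) mod P)"
proof -
  define d where "d = (i - M) div P"
  have d: "0 \<le> d" using P assms(4) by (simp add: d_def pos_imp_zdiv_nonneg_iff)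
  have "0 \<le> (i - M) mod P" using P by simp
  then have base: "M - P + (i - M) mod P \<ge> a" using assms(3) by linarith
  have "i = (M - P + (i - M) mod P) + int (nat (d + 1)) * P" using d
    by (simp add: d_def algebra_simps)
  then show ?thesis using periodic_right_mult[OF right P base, of "nat (d + 1)"] by simp
qed

lemma periodic_left_mod:
  fixes x :: "'a config"
  assumes left: "\<forall>i\<le>a. x (i - P) = x i" and P: "0 < P" and "P \<le> M + a" "i < - M"
  shows "x i = x (- M + (i + M) mod P)"
proof -
  define d where "d = (i + M) div P"
  have d: "d < 0" using P assms(4) by (simp add: d_def pos_imp_zdiv_neg_iff)
  have base: "- M + (i + M) mod P \<le> a"
    using pos_mod_bound[OF P, of "i + M"] assms(3) by linarith
  have "i = (- M + (i + M) mod P) - int (nat (- d)) * P" using d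
    by (simp add: d_def algebra_simps)
  then show ?thesis using periodic_left_mult[OF left P base, of "nat (- d)"] by simp
qed

text \<open>With a common period \<open>P\<close> beyond \<open>\<plusminus>M\<close>, the point is determined by \<open>x[-M, M)\<close>.\<close>

lemma countable_block_closed_eventually_periodic:
  fixes X :: "('a::finite) config set"
  assumes "block_closed X N" "countable X" "0 < N" "x \<in> X"
  shows "\<exists>M P :: nat. 0 < P \<and> P \<le> M
     \<and> (\<forall>i\<ge>int M. x i = x (int M - int P + (i - int M) mod int P))
     \<and> (\<forall>i < - int M. x i = x (- int M + (i + int M) mod int P))"
proof -
  obtain a1 p1 where r: "0 < p1" "\<forall>i\<ge>a1. x (i + p1) = x i"
    using countable_block_closed_periodic_right[OF assms] by blast
  obtain a2 p2 where l: "0 < p2" "\<forall>i\<le>a2. x (i - p2) = x i"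
    using countable_block_closed_periodic_left[OF assms] by blast
  define P where "P = p1 * p2"
  have P: "0 < P" using r l by (simp add: P_def)
  have right: "\<forall>i\<ge>a1. x (i + P) = x i"
    using periodic_right_mult[OF r(2,1), of _ "nat p2"] l(1) by (simp add: P_def mult.commute)
  have left: "\<forall>i\<le>a2. x (i - P) = x i"
    using periodic_left_mult[OF l(2,1), of _ "nat p1"] r(1) by (simp add: P_def)
  define M where "M = \<bar>a1\<bar> + \<bar>a2\<bar> + P"
  have "a1 + P \<le> M" "P \<le> M + a2" "P \<le> M" by (auto simp: M_def)
  then show ?thesis
    using P periodic_right_mod[OF right P] periodic_left_mod[OF left P]
    by (intro exI[of _ "nat M"] exI[of _ "nat P"]) simp
qed

section \<open>Coding eventually periodic points\<close>

text \<open>The position \<open>q - K\<close>, reduced along the period \<open>P\<close> into \<open>[-M, M)\<close>, shifted by \<open>M\<close>.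
  Positions are differences of naturals so that everything stays primitive recursive.\<close>

definition period_index :: "nat \<Rightarrow> nat \<Rightarrow> nat \<Rightarrow> nat \<Rightarrow> nat" where
  "period_index M P q K =
    (if K + M \<le> q then 2 * M - P + (q - K - M) mod P
     else if q + M < K then (P - 1) - (K - q - M - 1) mod P
     else q + M - K)"

definition pPeriodIndex :: "pexp \<Rightarrow> pexp \<Rightarrow> pexp \<Rightarrow> pexp \<Rightarrow> pexp" where
  "pPeriodIndex M P q K =
  pIf (pLe (Plus K M) q)
    (Plus (Monus (Times (Const 2) M) P) (pMod (Monus (Monus q K) M) P))
    (pIf (pLt (Plus q M) K)
       (Monus (Monus P (Const 1)) (pMod (Monus (Monus (Monus K q) M) (Const 1)) P))
       (Monus (Plus q M) K))"

lemma peval_pPeriodIndex[simp]: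
  "peval (pPeriodIndex M P q K) env = period_index (peval M env) (peval P env) (peval q env) (peval K env)"
  by (simp add: pPeriodIndex_def period_index_def)

lemma period_index_less:
  assumes "0 < P" "P \<le> M"
  shows "period_index M P q K < 2 * M"
proof -
  have "(q - K - M) mod P < P" using assms(1) by simp
  then show ?thesis using assms unfolding period_index_def by (simp only: split: if_split) linarith
qed

lemma period_index_diff:
  "period_index M P q K = (if K \<le> q then period_index M P (q - K) 0 else period_index M P 0 (K - q))"
  by (auto simp: period_index_def algebra_simps)

lemma period_index_eq:
  fixes M P :: nat and x :: "'a config"
  assumes P: "0 < P" "P \<le> M"
    and right: "\<forall>i\<ge>int M. x i = x (int M - int P + (i - int M) mod int P)"
    and left: "\<forall>i < - int M. x i = x (- int M + (i + int M) mod int P)"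
  shows "x (int (period_index M P q K) - int M) = x (int q - int K)"
proof -
  consider (right) "K + M \<le> q" | (left) "\<not> K + M \<le> q" "q + M < K" | (middle) "\<not> K + M \<le> q" "\<not> q + M < K"
    by blast
  then show ?thesis
  proof cases
    case right
    have "int (period_index M P q K) - int M = int M - int P + (int q - int K - int M) mod int P"
      using right P by (simp add: period_index_def of_nat_mod of_nat_diff diff_diff_eq)
    then show ?thesis using assms(3) right
      by (metis (no_types) add.commute diff_diff_eq le_diff_eq of_nat_add of_nat_le_iff)
  next
    case left
    define d where "d = K - q - M - 1"
    have "d mod P < P" using P by simp
    then have j: "int (period_index M P q K) = int P - 1 - int (d mod P)"
      using left by (simp add: period_index_def d_def of_nat_diff)
    have "int d = int P * int (d div P) + int (d mod P)" by (simp flip: of_nat_mult of_nat_add)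
    moreover have "int q - int K + int M = - (int d + 1)" using left by (simp add: d_def of_nat_diff)
    ultimately have "int q - int K + int M = int (period_index M P q K) + (- (int (d div P) + 1)) * int P"
      using j by (simp add: algebra_simps)
    then have "(int q - int K + int M) mod int P = int (period_index M P q K) mod int P" by simp
    also have "\<dots> = int (period_index M P q K)" using j \<open>d mod P < P\<close> by simp
    finally have "x (int (period_index M P q K) - int M) = x (- int M + (int q - int K + int M) mod int P)"
      by simp
    also have "\<dots> = x (int q - int K)" using assms(4) left by (simp add: algebra_simps)
    finally show ?thesis .
  next
    case middle
    then show ?thesis by (simp add: period_index_def of_nat_diff)
  qed
qed

locale ca_coding =
  fixes e :: "'a::finite \<Rightarrow> nat" and r :: nat and \<phi> :: "'a list \<Rightarrow> 'a"
    and forbidden :: "'a list list" and letters :: "'a list" and neighbourhoods :: "'a list list"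
    and X :: "'a config set" and f :: "'a config \<Rightarrow> 'a config"
  assumes inj_e: "inj e"
    and letters: "set letters = UNIV"
    and neighbourhoods: "set neighbourhoods = {ts. length ts = 2 * r + 1}"
    and X_avoid: "X = avoid (set forbidden)"
    and local_rule: "\<And>x i. x \<in> X \<Longrightarrow> f x i = \<phi> (map (\<lambda>t. x (i - int r + int t)) [0..<2 * r + 1])"
    and maps_to: "\<And>x. x \<in> X \<Longrightarrow> f x \<in> X"
begin

text \<open>A code \<open>c = list_encode (M # P # D)\<close> describes the point with letters \<open>D\<close> on \<open>[-M, M)\<close>
  that repeats its last (resp. first) \<open>P\<close> letters to the right (resp. left). Numbers outside
  the range of \<open>e\<close> are read as a fixed letter, so that every \<open>c\<close> describes some point.\<close>

definition letter_code :: "nat \<Rightarrow> nat" where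
  "letter_code v = (if v \<in> e ` set letters then v else e (hd letters))"

definition point_code :: "nat \<Rightarrow> nat \<Rightarrow> nat \<Rightarrow> nat" where
  "point_code c q K = letter_code (code_nth c (2 + period_index (code_nth c 0) (code_nth c 1) q K))"

definition decode_point :: "nat \<Rightarrow> 'a config" where
  "decode_point c i = inv e (if 0 \<le> i then point_code c (nat i) 0 else point_code c 0 (nat (- i)))"

definition avoids_at :: "nat \<Rightarrow> nat \<Rightarrow> bool" where
  "avoids_at c m \<longleftrightarrow> (\<forall>u\<in>set forbidden.
     \<not> (\<forall>t<length u. point_code c (m + t) 0 = e (u ! t)) \<and> \<not> (\<forall>t<length u. point_code c t m = e (u ! t)))"

fun rule_lookup :: "'a list list \<Rightarrow> nat list \<Rightarrow> nat" where
  "rule_lookup [] vs = 0"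
| "rule_lookup (ts # tss) vs =
     (if \<forall>i<length ts. vs ! i = e (ts ! i) then e (\<phi> ts) else rule_lookup tss vs)"

text \<open>A space-time diagram \<open>l = list_encode [k, n, D]\<close> lists, for \<open>t \<le> k\<close>, the codes of
  \<open>(f ^^ t) x\<close> on \<open>[-K, n + K)\<close> with \<open>K = k r\<close>: the dependence cone of the window \<open>[0, n)\<close>
  at time \<open>k\<close>. Cells are indexed by \<open>t\<close> and \<open>q\<close>, with position \<open>q - K\<close>.\<close>

definition dg_time :: "nat \<Rightarrow> nat" where
  "dg_time l = code_nth l 0"
definition dg_length :: "nat \<Rightarrow> nat" where
  "dg_length l = code_nth l 1"
definition dg_margin :: "nat \<Rightarrow> nat" where
  "dg_margin l = dg_time l * r"
definition dg_width :: "nat \<Rightarrow> nat" where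
  "dg_width l = dg_length l + 2 * dg_margin l"
definition dg_cell :: "nat \<Rightarrow> nat \<Rightarrow> nat \<Rightarrow> nat" where
  "dg_cell l t q = code_nth (code_nth l 2) (t * dg_width l + q)"

definition diagram_ok :: "nat \<Rightarrow> nat \<Rightarrow> bool" where
  "diagram_ok c l \<longleftrightarrow>
    (\<forall>q<dg_width l. dg_cell l 0 q = point_code c q (dg_margin l)) \<and>
    (\<forall>t<dg_time l. \<forall>q<dg_width l. r \<le> q \<and> q + r < dg_width l \<longrightarrow>
       dg_cell l (t + 1) q = rule_lookup neighbourhoods (map (\<lambda>i. dg_cell l t (q - r + i)) [0..<2 * r + 1]))"

definition diagram_output :: "nat \<Rightarrow> nat" where
  "diagram_output l = rec_nat 0
     (\<lambda>t acc. Suc (prod_encode (dg_cell l (dg_time l) (dg_margin l + (dg_length l - 1 - t)), acc)))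
     (dg_length l)"

definition witness :: "nat \<Rightarrow> nat \<Rightarrow> nat \<Rightarrow> nat \<Rightarrow> bool" where
  "witness c m l w \<longleftrightarrow> avoids_at c m \<and> m \<le> dg_time l \<and> diagram_ok c l \<and> w = diagram_output l"

definition pLetterCode :: "pexp \<Rightarrow> pexp" where
  "pLetterCode v = pIf (pDisj (map (\<lambda>a. pEq v (Const (e a))) letters)) v (Const (e (hd letters)))"

definition pPointCode :: "pexp \<Rightarrow> pexp \<Rightarrow> pexp \<Rightarrow> pexp" where
  "pPointCode c q K =
  pLetterCode (pNth c (Plus (Const 2) (pPeriodIndex (pNth c (Const 0)) (pNth c (Const 1)) q K)))"

definition pAvoidsAt :: "pexp \<Rightarrow> pexp \<Rightarrow> pexp" where
  "pAvoidsAt c m = pConj (map (\<lambda>u. pAnd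
   (pNot (pConj (map (\<lambda>t. pEq (pPointCode c (Plus m (Const t)) (Const 0)) (Const (e (u ! t)))) [0..<length u])))
   (pNot (pConj (map (\<lambda>t. pEq (pPointCode c (Const t) m) (Const (e (u ! t)))) [0..<length u])))) forbidden)"

fun pRuleLookup :: "'a list list \<Rightarrow> pexp list \<Rightarrow> pexp" where
  "pRuleLookup [] as = Const 0"
| "pRuleLookup (ts # tss) as =
     pIf (pConj (map (\<lambda>i. pEq (as ! i) (Const (e (ts ! i)))) [0..<length ts]))
       (Const (e (\<phi> ts))) (pRuleLookup tss as)"

definition pTime :: "pexp \<Rightarrow> pexp" where
  "pTime l = pNth l (Const 0)"
definition pLength :: "pexp \<Rightarrow> pexp" where
  "pLength l = pNth l (Const 1)"
definition pMargin :: "pexp \<Rightarrow> pexp" where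
  "pMargin l = Times (pTime l) (Const r)"
definition pWidth :: "pexp \<Rightarrow> pexp" where
  "pWidth l = Plus (pLength l) (Times (Const 2) (pMargin l))"
definition pCell :: "pexp \<Rightarrow> pexp \<Rightarrow> pexp \<Rightarrow> pexp" where
  "pCell l t q = pNth (pNth l (Const 2)) (Plus (Times t (pWidth l)) q)"

definition pDiagramOk :: "pexp \<Rightarrow> pexp \<Rightarrow> pexp" where
  "pDiagramOk c l = pAnd
  (pAll (pWidth l) (pEq (pCell (lift 0 l) (Const 0) (Var 0)) (pPointCode (lift 0 c) (Var 0) (pMargin (lift 0 l)))))
  (pAll (pTime l) (pAll (pWidth (lift 0 l))
     (pOr (pNot (pAnd (pLe (Const r) (Var 0)) (pLt (Plus (Var 0) (Const r)) (pWidth (lift 0 (lift 0 l))))))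
          (pEq (pCell (lift 0 (lift 0 l)) (Plus (Var 1) (Const 1)) (Var 0))
               (pRuleLookup neighbourhoods
                 (map (\<lambda>i. pCell (lift 0 (lift 0 l)) (Var 1) (Plus (Monus (Var 0) (Const r)) (Const i)))
                   [0..<2 * r + 1]))))))"

definition pOutput :: "pexp \<Rightarrow> pexp" where
  "pOutput l = Iter (Const 0)
  (Plus (Const 1) (pPair (pCell (lift 0 (lift 0 l)) (pTime (lift 0 (lift 0 l)))
      (Plus (pMargin (lift 0 (lift 0 l))) (Monus (Monus (pLength (lift 0 (lift 0 l))) (Const 1)) (Var 0))))
    (Var 1)))
  (pLength l)"

definition pWitness :: "pexp" where
  "pWitness = pSg (pAnd (pAnd (pAvoidsAt (Var 0) (Var 1)) (pLe (Var 1) (pTime (Var 2))))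
                             (pAnd (pDiagramOk (Var 0) (Var 2)) (pEq (Var 3) (pOutput (Var 2)))))"

lemma peval_pLetterCode[simp]: "peval (pLetterCode v) env = letter_code (peval v env)"
  by (auto simp: pLetterCode_def letter_code_def)

lemma peval_pPointCode[simp]: "peval (pPointCode c q K) env = point_code (peval c env) (peval q env) (peval K env)"
  by (simp add: pPointCode_def point_code_def)

lemma peval_pAvoidsAt[simp]: "peval (pAvoidsAt c m) env = of_bool (avoids_at (peval c env) (peval m env))"
  unfolding pAvoidsAt_def avoids_at_def by (simp add: atLeast0LessThan lessThan_def)

lemma peval_pRuleLookup:
  "\<forall>ts\<in>set tss. length ts \<le> length as \<Longrightarrow>
   peval (pRuleLookup tss as) env = rule_lookup tss (map (\<lambda>a. peval a env) as)"
  by (induction tss) auto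

lemma peval_diagram_fields[simp]:
  "peval (pTime l) env = dg_time (peval l env)"
  "peval (pLength l) env = dg_length (peval l env)"
  "peval (pMargin l) env = dg_margin (peval l env)"
  "peval (pWidth l) env = dg_width (peval l env)"
  "peval (pCell l t q) env = dg_cell (peval l env) (peval t env) (peval q env)"
  by (simp_all add: pTime_def dg_time_def pLength_def dg_length_def pMargin_def dg_margin_def
      pWidth_def dg_width_def pCell_def dg_cell_def)

lemma peval_pDiagramOk[simp]: "peval (pDiagramOk c l) env = of_bool (diagram_ok (peval c env) (peval l env))"
  using neighbourhoods
  by (simp add: pDiagramOk_def diagram_ok_def peval_pRuleLookup o_def del: upt_Suc) (metis add_lessD1)

lemma peval_pOutput[simp]: "peval (pOutput l) env = diagram_output (peval l env)"
  by (simp add: pOutput_def diagram_output_def)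

lemma peval_pWitness: "peval pWitness [c, m, l, w] = of_bool (witness c m l w)"
  by (simp add: pWitness_def witness_def)

lemma recursive_witness: "recursive_pred4 witness"
  unfolding recursive_pred4_def
proof (intro exI[of _ "compile 4 pWitness"] allI)
  fix c m l w
  have "reval (compile 4 pWitness) [c, m, l, w] (peval pWitness [c, m, l, w])"
    by (rule reval_compile) simp
  then show "(witness c m l w \<longrightarrow> reval (compile 4 pWitness) [c, m, l, w] 1) \<and>
      (\<not> witness c m l w \<longrightarrow> reval (compile 4 pWitness) [c, m, l, w] 0)"
    by (cases "witness c m l w") (simp_all add: peval_pWitness)
qed

lemma e_eq_iff: "e a = e b \<longleftrightarrow> a = b"
  using inj_e by (auto dest: injD)

lemma letter_code_in_range: "letter_code v \<in> range e"
  using letters by (auto simp: letter_code_def)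

lemma letter_code_e[simp]: "letter_code (e a) = e a"
  using letters by (simp add: letter_code_def)

lemma e_decode_point: "e (decode_point c (int q - int K)) = point_code c q K"
proof -
  have "point_code c q K = (if 0 \<le> int q - int K then point_code c (nat (int q - int K)) 0
      else point_code c 0 (nat (- (int q - int K))))"
    unfolding point_code_def by (subst period_index_diff) (auto simp: nat_diff_distrib)
  then show ?thesis unfolding decode_point_def using letter_code_in_range
    by (simp add: point_code_def f_inv_into_f[of _ e UNIV])
qed

lemma avoids_at_iff:
  "avoids_at c m \<longleftrightarrow> (\<forall>u\<in>set forbidden.
     \<not> occurs_at u (decode_point c) (int m) \<and> \<not> occurs_at u (decode_point c) (- int m))"
proof -
  have "point_code c (m + t) 0 = e (decode_point c (int m + int t))" for t
    using e_decode_point[of c "m + t" 0] by simp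
  moreover have "point_code c t m = e (decode_point c (- int m + int t))" for t
    using e_decode_point[of c t m] by (simp add: algebra_simps)
  ultimately show ?thesis unfolding avoids_at_def occurs_at_iff_nth by (simp add: e_eq_iff)
qed

lemma avoids_everywhere_iff: "(\<forall>m. avoids_at c m) \<longleftrightarrow> decode_point c \<in> X"
proof -
  have "(\<forall>i. P i) \<longleftrightarrow> (\<forall>m. P (int m) \<and> P (- int m))" for P :: "int \<Rightarrow> bool"
  proof (intro iffI allI)
    fix i assume P: "\<forall>m. P (int m) \<and> P (- int m)"
    show "P i"
    proof (cases "0 \<le> i")
      case True then show ?thesis using P[rule_format, of "nat i"] by simp
    next
      case False then show ?thesis using P[rule_format, of "nat (- i)"] by simp
    qed
  qed simp
  note split = this
  have "decode_point c \<in> X \<longleftrightarrow> (\<forall>i. \<forall>u\<in>set forbidden. \<not> occurs_at u (decode_point c) i)"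
    by (auto simp: X_avoid avoid_def)
  also have "\<dots> \<longleftrightarrow> (\<forall>m. avoids_at c m)"
    unfolding split avoids_at_iff by (simp add: ball_conj_distrib)
  finally show ?thesis ..
qed

lemma decode_point_exists:
  assumes "0 < P" "P \<le> M"
    and "\<forall>i\<ge>int M. x i = x (int M - int P + (i - int M) mod int P)"
    and "\<forall>i < - int M. x i = x (- int M + (i + int M) mod int P)"
  shows "\<exists>c. decode_point c = x"
proof -
  define c where "c = list_encode (M # P # map (\<lambda>j. e (x (int j - int M))) [0..<2 * M])"
  have "point_code c q K = e (x (int q - int K))" for q K
  proof -
    have "code_nth c 0 = M" "code_nth c 1 = P"
      by (simp_all add: c_def code_nth_list_encode del: list_encode.simps)
    moreover have "code_nth c (2 + j) = e (x (int j - int M))" if "j < 2 * M" for j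
      using that by (simp add: c_def code_nth_list_encode del: list_encode.simps)
    ultimately show ?thesis
      using period_index_less[OF assms(1,2)] period_index_eq[OF assms] by (simp add: point_code_def)
  qed
  then have "decode_point c i = x i" for i
    by (simp add: decode_point_def inv_f_f[OF inj_e])
  then show ?thesis by blast
qed

lemma rule_lookup_mem:
  "ts \<in> set tss \<Longrightarrow> \<forall>ts'\<in>set tss. length ts' = length ts \<Longrightarrow> rule_lookup tss (map e ts) = e (\<phi> ts)"
proof (induction tss)
  case (Cons ts' tss)
  show ?case
  proof (cases "ts' = ts")
    case False
    have length: "length ts' = length ts" using Cons.prems(2) by simp
    have mismatch: "\<not> (\<forall>i<length ts'. map e ts ! i = e (ts' ! i))"
    proof
      assume h: "\<forall>i<length ts'. map e ts ! i = e (ts' ! i)"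
      have "ts' = ts"
      proof (rule nth_equalityI)
        fix i assume "i < length ts'"
        then show "ts' ! i = ts ! i" using h length by (simp add: e_eq_iff)
      qed (fact length)
      then show False using False by simp
    qed
    have "rule_lookup tss (map e ts) = e (\<phi> ts)"
    proof (rule Cons.IH)
      show "ts \<in> set tss" using Cons.prems(1) False by simp
      show "\<forall>t\<in>set tss. length t = length ts" using Cons.prems(2) by simp
    qed
    then show ?thesis by (simp only: rule_lookup.simps if_not_P[OF mismatch])
  qed simp
qed simp

lemma rule_lookup_eq: "length ts = 2 * r + 1 \<Longrightarrow> rule_lookup neighbourhoods (map e ts) = e (\<phi> ts)"
  using rule_lookup_mem neighbourhoods by simp

lemma funpow_maps_to: "x \<in> X \<Longrightarrow> (f ^^ t) x \<in> X"
  by (induction t) (auto intro: maps_to)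

lemma rule_lookup_step:
  assumes z: "z \<in> X" and q: "r \<le> q"
    and g: "\<And>i. i < 2 * r + 1 \<Longrightarrow> g (q - r + i) = e (z (int (q - r + i) - int K))"
  shows "rule_lookup neighbourhoods (map (\<lambda>i. g (q - r + i)) [0..<2 * r + 1]) = e (f z (int q - int K))"
proof -
  let ?ts = "map (\<lambda>i. z (int q - int K - int r + int i)) [0..<2 * r + 1]"
  have "map (\<lambda>i. g (q - r + i)) [0..<2 * r + 1] = map e ?ts"
    using g q by (simp del: upt_Suc add: algebra_simps of_nat_diff)
  then have "rule_lookup neighbourhoods (map (\<lambda>i. g (q - r + i)) [0..<2 * r + 1]) = e (\<phi> ?ts)"
    by (simp only: rule_lookup_eq length_map length_upt diff_zero)
  also have "\<phi> ?ts = f z (int q - int K)" using local_rule[OF z] by simp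
  finally show ?thesis .
qed

lemma diagram_output_eq:
  "diagram_output l = list_encode (map (\<lambda>q. dg_cell l (dg_time l) (dg_margin l + q)) [0..<dg_length l])"
  using rec_nat_list_encode[of "dg_length l" "dg_length l" "\<lambda>q. dg_cell l (dg_time l) (dg_margin l + q)"]
  by (simp add: diagram_output_def)

lemma diagram_cell_eq:
  assumes x: "decode_point c \<in> X" and D: "diagram_ok c l"
  shows "t \<le> dg_time l \<Longrightarrow> r * t \<le> q \<Longrightarrow> q + r * t < dg_width l \<Longrightarrow>
    dg_cell l t q = e ((f ^^ t) (decode_point c) (int q - int (dg_margin l)))"
proof (induction t arbitrary: q)
  case 0
  then show ?case using D e_decode_point by (simp add: diagram_ok_def)
next
  case (Suc t)
  have q: "r \<le> q" "q + r < dg_width l" using Suc.prems by auto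
  have "dg_cell l (Suc t) q = rule_lookup neighbourhoods (map (\<lambda>i. dg_cell l t (q - r + i)) [0..<2 * r + 1])"
    using D Suc.prems q unfolding diagram_ok_def by auto
  also have "\<dots> = e (f ((f ^^ t) (decode_point c)) (int q - int (dg_margin l)))"
  proof (rule rule_lookup_step[OF funpow_maps_to[OF x] q(1)])
    fix i assume "i < 2 * r + 1"
    then show "dg_cell l t (q - r + i) = e ((f ^^ t) (decode_point c) (int (q - r + i) - int (dg_margin l)))"
      using Suc.prems by (intro Suc.IH) (auto simp: algebra_simps)
  qed
  finally show ?case by simp
qed

lemma diagram_output_window:
  assumes "decode_point c \<in> X" "diagram_ok c l"
  shows "diagram_output l = list_encode (map e (window ((f ^^ dg_time l) (decode_point c)) (dg_length l)))"
proof -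
  have "dg_cell l (dg_time l) (dg_margin l + q) = e ((f ^^ dg_time l) (decode_point c) (int q))"
    if "q < dg_length l" for q
    using diagram_cell_eq[OF assms, of "dg_time l" "dg_margin l + q"] that
    by (simp add: dg_margin_def dg_width_def mult.commute)
  then have "map (\<lambda>q. dg_cell l (dg_time l) (dg_margin l + q)) [0..<dg_length l]
      = map e (window ((f ^^ dg_time l) (decode_point c)) (dg_length l))"
    by (simp add: window_def)
  then show ?thesis by (simp only: diagram_output_eq)
qed

definition canonical_cells :: "nat \<Rightarrow> nat \<Rightarrow> nat \<Rightarrow> nat list" where
  "canonical_cells c k n = map
     (\<lambda>j. e ((f ^^ (j div (n + 2 * (k * r)))) (decode_point c) (int (j mod (n + 2 * (k * r))) - int (k * r))))
     [0..<(k + 1) * (n + 2 * (k * r))]"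

definition canonical_diagram :: "nat \<Rightarrow> nat \<Rightarrow> nat \<Rightarrow> nat" where
  "canonical_diagram c k n = list_encode [k, n, list_encode (canonical_cells c k n)]"

lemma canonical_diagram_fields:
  "dg_time (canonical_diagram c k n) = k" "dg_length (canonical_diagram c k n) = n"
  "dg_margin (canonical_diagram c k n) = k * r" "dg_width (canonical_diagram c k n) = n + 2 * (k * r)"
  by (simp_all add: canonical_diagram_def dg_time_def dg_length_def dg_margin_def dg_width_def
      code_nth_list_encode del: list_encode.simps)

lemma canonical_diagram_cell:
  assumes "t \<le> k" "q < n + 2 * (k * r)"
  shows "dg_cell (canonical_diagram c k n) t q = e ((f ^^ t) (decode_point c) (int q - int (k * r)))"
proof -
  define W where "W = n + 2 * (k * r)"
  have "t * W + q < t * W + W" using assms by (simp add: W_def)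
  also have "\<dots> = (t + 1) * W" by simp
  also have "\<dots> \<le> (k + 1) * W" using assms(1) by (intro mult_le_mono1) simp
  finally have lt: "t * W + q < length (canonical_cells c k n)" by (simp add: canonical_cells_def W_def)
  have "dg_cell (canonical_diagram c k n) t q = code_nth (list_encode (canonical_cells c k n)) (t * W + q)"
    by (simp add: dg_cell_def canonical_diagram_fields W_def)
      (simp add: canonical_diagram_def code_nth_list_encode del: list_encode.simps)
  also have "\<dots> = canonical_cells c k n ! (t * W + q)" using lt by (rule code_nth_list_encode)
  also have "\<dots> = e ((f ^^ t) (decode_point c) (int q - int (k * r)))"
    using lt assms(2) by (simp add: canonical_cells_def W_def[symmetric] del: upt_Suc)
  finally show ?thesis .
qed

lemma diagram_ok_canonical_diagram:
  assumes x: "decode_point c \<in> X"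
  shows "diagram_ok c (canonical_diagram c k n)"
  unfolding diagram_ok_def canonical_diagram_fields
proof (intro conjI allI impI)
  fix q assume "q < n + 2 * (k * r)"
  then show "dg_cell (canonical_diagram c k n) 0 q = point_code c q (k * r)"
    using canonical_diagram_cell[of 0 k q n c] e_decode_point[of c q "k * r"] by simp
next
  fix t q assume t: "t < k" and q: "q < n + 2 * (k * r)" "r \<le> q \<and> q + r < n + 2 * (k * r)"
  have "rule_lookup neighbourhoods (map (\<lambda>i. dg_cell (canonical_diagram c k n) t (q - r + i)) [0..<2 * r + 1])
      = e (f ((f ^^ t) (decode_point c)) (int q - int (k * r)))"
  proof (rule rule_lookup_step[OF funpow_maps_to[OF x]])
    fix i assume "i < 2 * r + 1"
    then show "dg_cell (canonical_diagram c k n) t (q - r + i) =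
        e ((f ^^ t) (decode_point c) (int (q - r + i) - int (k * r)))"
      using q t by (intro canonical_diagram_cell) auto
  qed (use q in auto)
  also have "\<dots> = dg_cell (canonical_diagram c k n) (t + 1) q"
    using canonical_diagram_cell[of "t + 1" k q n c] t q by simp
  finally show "dg_cell (canonical_diagram c k n) (t + 1) q =
      rule_lookup neighbourhoods (map (\<lambda>i. dg_cell (canonical_diagram c k n) t (q - r + i)) [0..<2 * r + 1])"
    by simp
qed

lemma witness_of_language:
  assumes "countable X" "block_closed X N" "0 < N" "u \<in> language (asymptotic_set X f)"
  shows "\<exists>c. \<forall>m. \<exists>l. witness c m l (word_code e u)"
proof -
  obtain x where x: "x \<in> X" "\<forall>n. \<exists>k\<ge>n. window ((f ^^ k) x) (length u) = u"
    using assms(4) language_asymptotic_set_iff by blast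
  obtain c where c: "decode_point c = x"
    using countable_block_closed_eventually_periodic[OF assms(2,1,3) x(1)] decode_point_exists by blast
  have "\<exists>l. witness c m l (word_code e u)" for m
  proof -
    obtain k where k: "k \<ge> m" "window ((f ^^ k) x) (length u) = u" using x(2) by blast
    let ?l = "canonical_diagram c k (length u)"
    have "diagram_output ?l = word_code e u"
      using diagram_output_window[OF _ diagram_ok_canonical_diagram] c x(1) k(2)
      by (simp add: canonical_diagram_fields word_code_def)
    moreover have "avoids_at c m" using avoids_everywhere_iff c x(1) by blast
    moreover have "diagram_ok c ?l" using diagram_ok_canonical_diagram c x(1) by blast
    ultimately have "witness c m ?l (word_code e u)"
      using k(1) by (simp add: witness_def canonical_diagram_fields)
    then show ?thesis ..
  qed
  then show ?thesis by blast
qed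

lemma language_of_witness:
  assumes "\<forall>m. \<exists>l. witness c m l w"
  shows "w \<in> word_code e ` language (asymptotic_set X f)"
proof -
  let ?x = "decode_point c"
  have x: "?x \<in> X" using assms avoids_everywhere_iff by (auto simp: witness_def)
  have outputs: "\<exists>l. dg_time l \<ge> m \<and> w = word_code e (window ((f ^^ dg_time l) ?x) (dg_length l))" for m
    using assms diagram_output_window[OF x] by (fastforce simp: witness_def word_code_def)
  then obtain l0 where l0: "w = word_code e (window ((f ^^ dg_time l0) ?x) (dg_length l0))" by blast
  define u where "u = window ((f ^^ dg_time l0) ?x) (dg_length l0)"
  have "\<exists>k\<ge>n. window ((f ^^ k) ?x) (length u) = u" for n
  proof -
    obtain l where l: "dg_time l \<ge> n" "w = word_code e (window ((f ^^ dg_time l) ?x) (dg_length l))"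
      using outputs by blast
    then have "window ((f ^^ dg_time l) ?x) (dg_length l) = u"
      using l0 inj_e by (simp add: u_def word_code_def list_encode_eq inj_map_eq_map)
    then show ?thesis using l(1) by (metis length_window)
  qed
  then have "u \<in> language (asymptotic_set X f)" using language_asymptotic_set_iff x by blast
  then show ?thesis using l0 by (simp add: u_def)
qed

end

theorem lemma2:
  fixes X :: "('a::finite) config set" and f :: "'a config \<Rightarrow> 'a config" and e :: "'a \<Rightarrow> nat"
  assumes "countable X" and "is_SFT X" and "cellular_automaton X f" and "inj e"
  shows "Sigma0_3 (word_code e ` language (asymptotic_set X f))"
proof -
  obtain F where F: "finite F" "X = avoid F" using assms(2) is_SFT_iff_avoid by blast
  obtain N where N: "0 < N" "block_closed X N" using avoid_bounded_words[OF F(1)] F(2) by metis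
  obtain r \<phi> where local_rule: "\<forall>x\<in>X. \<forall>i. f x i = \<phi> (map (\<lambda>t. x (i - int r + int t)) [0..<2 * r + 1])"
    using ca_local_rule[OF assms(3)] F(2) shift_invariant_avoid cl_avoid_subset by blast
  obtain forbidden where "set forbidden = F" using finite_list[OF F(1)] by blast
  moreover obtain letters :: "'a list" where "set letters = UNIV" using finite_list[OF finite_UNIV] by blast
  moreover obtain neighbourhoods :: "'a list list" where "set neighbourhoods = {ts. length ts = 2 * r + 1}"
    using finite_list[OF finite_lists_of_length] by blast
  ultimately interpret ca_coding e r \<phi> forbidden letters neighbourhoods X f
    using assms(3,4) F(2) local_rule by unfold_locales (auto simp: cellular_automaton_def)
  show ?thesis
    unfolding Sigma0_3_def
    using recursive_witness witness_of_language[OF assms(1) N(2,1)] language_of_witness by blast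
qed

end
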